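(* Let $k\ge1$ and let $a\ge b\ge0$ be integers with $a+b\le k$. Then $\mathcal{R}^k_{(a,b),(b,a)}=T_1\cup T_2\cup T_3\cup T_4\cup T_5$, and the sets $T_1,\dots,T_5$ are pairwise disjoint. Moreover: - for every weight of the form $(p-2l,p+l)$ or $(p+l,p-2l)$ in $T_1\cup T_2\cup T_3$ (with $p,l$ as in the defining parametrization), $$N^{(k)(p-2l,p+l)}_{(a,b),(b,a)}=N^{(k)(p+l,p-2l)}_{(a,b),(b,a)}=M(p,l);$$ - for every $(p,p)\in T_4\cup T_5$, $N^{(k)(p,p)}_{(a,b),(b,a)}=M(p,0)$, where $$M(p,l)=\min(k,a+b+p-l)-a-b+l-\max(p-b,l)-\max(p-a,l)+1 .$$
   Context: $\widehat{\mathfrak{su}}(3)_k$ fusion. Fix an integer $k\ge1$ and let $P_+^k=\{(\lambda_1,\lambda_2)\in\mathbb{Z}_{\ge0}^2:\lambda_1+\lambda_2\le k\}$. For $\lambda,\mu,\nu\in P_+^k$ set - $\mathcal{A}=\tfrac13[2(\lambda_1+\mu_1+\nu_2)+\lambda_2+\mu_2+\nu_1]$, - $\mathcal{B}=\tfrac13[\lambda_1+\mu_1+\nu_2+2(\lambda_2+\mu_2+\nu_1)]$, - $k_0^{\max}=\min(\mathcal{A},\mathcal{B})$, - $k_0^{\min}=\max(\lambda_1+\lambda_2,\mu_1+\mu_2,\nu_1+\nu_2,\mathcal{A}-\lambda_1,\mathcal{A}-\mu_1,\mathcal{A}-\nu_2,\mathcal{B}-\lambda_2,\mathcal{B}-\mu_2,\mathcal{B}-\nu_1)$.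 The fusion multiplicity is $N^{(k)\nu}_{\lambda,\mu}=\min(k_0^{\max},k)-k_0^{\min}+1$ if $\mathcal{A},\mathcal{B}$ are nonnegative integers, $k_0^{\max}\ge k_0^{\min}$ and $k\ge k_0^{\min}$; otherwise it is $0$. The set $\mathcal{R}^k_{\lambda,\mu}$ is $\{\nu\in P_+^k:N^{(k)\nu}_{\lambda,\mu}\ne0\}$. In the definitions below, $p,l$ range over integers, and each set is empty unless its stated condition holds. - If $b\ge2$ and $k\ge2a+3$: $T_1=\{(p-2l,p+l),(p+l,p-2l):a+2\le p\le\min(a+b,k-a-1,\lfloor2k/3\rfloor,\lfloor(b+k)/2\rfloor),\ \max(1,2p-k)\le l\le\min(p-a-1,\lfloor p/2\rfloor,b)\}$. - If $b\ge1$ and $k\ge a+b+1$: $T_2=\{(p-2l,p+l),(p+l,p-2l):b+1\le p\le\min(a+b,k-a),\ \max(1,p-a)\le l\le\min(p-b,\lfloor p/2\rfloor,b)\}$. - If $b\ge2$ and $k\ge a+b+1$: $T_3=\{(p-2l,p+l),(p+l,p-2l):2\le p\le\min(k-a-1,2b-2),\ \max(1,p-b+1)\le l\le\min(k-a-b,\lfloor p/2\rfloor,b)\}$. - $T_4=\{(p,p):0\le p\le\min(a,k-a)\}$. - If $k\ge2a+2$: $T_5=\{(p,p):a+1\le p\le\min(a+b,\lfloor k/2\rfloor)\}$. *)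

theory Defs
  imports Main "HOL-Library.Disjoint_Sets" Complex_Main
begin

type_synonym weight = "int \<times> int"

text \<open>Dominant weights of affine su(3) at level k.\<close>
definition Pplus :: "int \<Rightarrow> weight set" where
  "Pplus k = {(l1, l2). l1 \<ge> 0 \<and> l2 \<ge> 0 \<and> l1 + l2 \<le> k}"

definition calA :: "weight \<Rightarrow> weight \<Rightarrow> weight \<Rightarrow> rat" where
  "calA lam mu nu = (2 * of_int (fst lam + fst mu + snd nu) + of_int (snd lam + snd mu + fst nu)) / 3"

definition calB :: "weight \<Rightarrow> weight \<Rightarrow> weight \<Rightarrow> rat" where
  "calB lam mu nu = (of_int (fst lam + fst mu + snd nu) + 2 * of_int (snd lam + snd mu + fst nu)) / 3"

definition k0max :: "weight \<Rightarrow> weight \<Rightarrow> weight \<Rightarrow> rat" where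
  "k0max lam mu nu = min (calA lam mu nu) (calB lam mu nu)"

definition k0min :: "weight \<Rightarrow> weight \<Rightarrow> weight \<Rightarrow> rat" where
  "k0min lam mu nu = (let A = calA lam mu nu; B = calB lam mu nu in
     Max {of_int (fst lam + snd lam), of_int (fst mu + snd mu), of_int (fst nu + snd nu),
          A - of_int (fst lam), A - of_int (fst mu), A - of_int (snd nu),
          B - of_int (snd lam), B - of_int (snd mu), B - of_int (fst nu)})"

definition fusion_mult :: "int \<Rightarrow> weight \<Rightarrow> weight \<Rightarrow> weight \<Rightarrow> rat" where
  "fusion_mult k lam mu nu =
    (let A = calA lam mu nu; B = calB lam mu nu; kmax = k0max lam mu nu; kmin = k0min lam mu nu in
     if A \<in> \<int> \<and> B \<in> \<int> \<and> A \<ge> 0 \<and> B \<ge> 0 \<and> kmax \<ge> kmin \<and> of_int k \<ge> kmin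
     then min kmax (of_int k) - kmin + 1 else 0)"

definition fusion_range :: "int \<Rightarrow> weight \<Rightarrow> weight \<Rightarrow> weight set" where
  "fusion_range k lam mu = {nu \<in> Pplus k. fusion_mult k lam mu nu \<noteq> 0}"

definition Par1 :: "int \<Rightarrow> int \<Rightarrow> int \<Rightarrow> (int \<times> int) set" where
  "Par1 k a b = (if b \<ge> 2 \<and> k \<ge> 2*a + 3 then
     {(p, l). a + 2 \<le> p \<and> p \<le> min (min (a + b) (k - a - 1)) (min ((2*k) div 3) ((b + k) div 2))
        \<and> max 1 (2*p - k) \<le> l \<and> l \<le> min (min (p - a - 1) (p div 2)) b}
     else {})"

definition Par2 :: "int \<Rightarrow> int \<Rightarrow> int \<Rightarrow> (int \<times> int) set" where
  "Par2 k a b = (if b \<ge> 1 \<and> k \<ge> a + b + 1 then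
     {(p, l). b + 1 \<le> p \<and> p \<le> min (a + b) (k - a)
        \<and> max 1 (p - a) \<le> l \<and> l \<le> min (min (p - b) (p div 2)) b}
     else {})"

definition Par3 :: "int \<Rightarrow> int \<Rightarrow> int \<Rightarrow> (int \<times> int) set" where
  "Par3 k a b = (if b \<ge> 2 \<and> k \<ge> a + b + 1 then
     {(p, l). 2 \<le> p \<and> p \<le> min (k - a - 1) (2*b - 2)
        \<and> max 1 (p - b + 1) \<le> l \<and> l \<le> min (min (k - a - b) (p div 2)) b}
     else {})"

definition Par4 :: "int \<Rightarrow> int \<Rightarrow> int \<Rightarrow> int set" where
  "Par4 k a b = {p. 0 \<le> p \<and> p \<le> min a (k - a)}"

definition Par5 :: "int \<Rightarrow> int \<Rightarrow> int \<Rightarrow> int set" where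
  "Par5 k a b = (if k \<ge> 2*a + 2 then {p. a + 1 \<le> p \<and> p \<le> min (a + b) (k div 2)} else {})"

definition Tpair :: "(int \<times> int) set \<Rightarrow> weight set" where
  "Tpair P = {(p - 2*l, p + l) | p l. (p, l) \<in> P} \<union> {(p + l, p - 2*l) | p l. (p, l) \<in> P}"

definition Tdiag :: "int set \<Rightarrow> weight set" where
  "Tdiag P = {(p, p) | p. p \<in> P}"

definition T1 where "T1 k a b = Tpair (Par1 k a b)"
definition T2 where "T2 k a b = Tpair (Par2 k a b)"
definition T3 where "T3 k a b = Tpair (Par3 k a b)"
definition T4 where "T4 k a b = Tdiag (Par4 k a b)"
definition T5 where "T5 k a b = Tdiag (Par5 k a b)"

definition Tfam :: "int \<Rightarrow> int \<Rightarrow> int \<Rightarrow> nat \<Rightarrow> weight set" where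
  "Tfam k a b i = (if i = 1 then T1 k a b else if i = 2 then T2 k a b else
     if i = 3 then T3 k a b else if i = 4 then T4 k a b else T5 k a b)"

definition Mfun :: "int \<Rightarrow> int \<Rightarrow> int \<Rightarrow> int \<Rightarrow> int \<Rightarrow> int" where
  "Mfun k a b p l = min k (a + b + p - l) - a - b + l - max (p - b) l - max (p - a) l + 1"

end

theory Submission imports Defs begin

text \<open>
  For lambda = (a, b) and mu = (b, a) the multiplicity is unchanged when nu is transposed:
  transposing all three weights swaps A and B, and lambda and mu may be exchanged.
  Integrality of A means 3 divides nu2 - nu1, i.e. nu = (p - 2l, p + l), and by the symmetry
  we may take l >= 0. Then A = a + b + p, B = a + b + p - l and k0min = max (a + b + l, 2p - l, a + p),
  so the multiplicity is max 0 (M p l). The condition M p l > 0 is a system of six linear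
  inequalities; for l > 0 the sets T1, T2, T3 split its solutions according to l < p - a,
  p - a <= l <= p - b and p - b < l, and for l = 0 the sets T4, T5 according to p <= a.
\<close>

lemma le_div_iff_mult_le:
  fixes x y d :: int
  assumes "0 < d"
  shows "x \<le> y div d \<longleftrightarrow> d * x \<le> y"
proof
  assume "x \<le> y div d"
  then have "d * x \<le> d * (y div d)" using assms by simp
  also have "\<dots> \<le> y"
    using assms by (metis div_mult_mod_eq pos_mod_sign le_add_same_cancel1 mult.commute)
  finally show "d * x \<le> y" .
next
  assume "d * x \<le> y"
  then have "(d * x) div d \<le> y div d" using assms by (rule zdiv_mono1)
  then show "x \<le> y div d" using assms by simp
qed

lemma calA_transpose: "calA (prod.swap lam) (prod.swap mu) (prod.swap nu) = calB lam mu nu"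
  by (simp add: calA_def calB_def)

lemma calB_transpose: "calB (prod.swap lam) (prod.swap mu) (prod.swap nu) = calA lam mu nu"
  by (simp add: calA_def calB_def)

lemma k0min_transpose: "k0min (prod.swap lam) (prod.swap mu) (prod.swap nu) = k0min lam mu nu"
  unfolding k0min_def Let_def calA_transpose calB_transpose
  by (rule arg_cong[where f = Max]) (auto simp: add.commute)

lemma fusion_mult_transpose:
  "fusion_mult k (prod.swap lam) (prod.swap mu) (prod.swap nu) = fusion_mult k lam mu nu"
  unfolding fusion_mult_def Let_def k0max_def calA_transpose calB_transpose k0min_transpose
  by (simp add: min.commute conj_ac)

lemma fusion_mult_commute: "fusion_mult k lam mu nu = fusion_mult k mu lam nu"
proof -
  have "calA lam mu nu = calA mu lam nu" "calB lam mu nu = calB mu lam nu"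
    by (simp_all add: calA_def calB_def ac_simps)
  moreover have "k0min lam mu nu = k0min mu lam nu"
    unfolding k0min_def Let_def calA_def calB_def
    by (rule arg_cong[where f = Max]) (auto simp: ac_simps)
  ultimately show ?thesis by (simp add: fusion_mult_def k0max_def)
qed

lemma fusion_mult_conjugate_pair_swap:
  "fusion_mult k (a, b) (b, a) (prod.swap nu) = fusion_mult k (a, b) (b, a) nu"
  using fusion_mult_transpose[of k "(b, a)" "(a, b)" nu] fusion_mult_commute[of k "(b, a)" "(a, b)"]
  by simp

lemma swap_mem_fusion_range:
  "prod.swap nu \<in> fusion_range k (a, b) (b, a) \<longleftrightarrow> nu \<in> fusion_range k (a, b) (b, a)"
proof -
  have "prod.swap nu \<in> Pplus k \<longleftrightarrow> nu \<in> Pplus k" by (cases nu) (auto simp: Pplus_def)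
  then show ?thesis by (simp add: fusion_range_def fusion_mult_conjugate_pair_swap)
qed

lemma fusion_mult_eq_0_if_not_dvd:
  assumes "\<not> (3::int) dvd (y - x)"
  shows "fusion_mult k (a, b) (b, a) (x, y) = 0"
proof -
  have "calA (a, b) (b, a) (x, y) \<notin> \<int>"
  proof
    assume "calA (a, b) (b, a) (x, y) \<in> \<int>"
    then obtain n where "calA (a, b) (b, a) (x, y) = of_int n" by (auto elim: Ints_cases)
    then have "(of_int (3*n) :: rat) = of_int (3*(a + b) + x + 2*y)"
      unfolding calA_def by (simp add: field_simps)
    then have "3*n = 3*(a + b) + x + 2*y" by (simp only: of_int_eq_iff)
    then have "y - x = 3 * (y - n + a + b)" by simp
    with assms show False by simp
  qed
  then show ?thesis by (simp add: fusion_mult_def Let_def)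
qed

lemma calA_param: "calA (a, b) (b, a) (p - 2*l, p + l) = of_int (a + b + p)"
  by (simp add: calA_def field_simps)

lemma calB_param: "calB (a, b) (b, a) (p - 2*l, p + l) = of_int (a + b + p - l)"
  by (simp add: calB_def field_simps)

lemma k0min_param:
  assumes "b \<le> a" "0 \<le> l"
  shows "k0min (a, b) (b, a) (p - 2*l, p + l) = of_int (max (a + b + l) (max (2*p - l) (a + p)))"
  unfolding k0min_def Let_def calA_param calB_param
  by (rule Max_eqI) (use assms in \<open>auto simp flip: of_int_add of_int_diff simp: max_def\<close>)

text \<open>The two \<open>max\<close> terms of \<open>Mfun\<close> add up to \<open>k0min\<close>: the fourth candidate
  \<open>b + p\<close> is dominated by \<open>a + p\<close>.\<close>

lemma Mfun_eq:
  assumes "b \<le> a"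
  shows "Mfun k a b p l = min (a + b + p - l) k - max (a + b + l) (max (2*p - l) (a + p)) + 1"
  using assms by (simp add: Mfun_def max_def min_def)

lemma Mfun_pos_iff:
  assumes "b \<le> a"
  shows "0 < Mfun k a b p l \<longleftrightarrow>
    2*l \<le> p \<and> p \<le> a + b \<and> l \<le> b \<and> a + b + l \<le> k \<and> 2*p - l \<le> k \<and> a + p \<le> k"
  unfolding Mfun_eq[OF assms] by linarith

lemma fusion_mult_param:
  assumes "0 \<le> b" "b \<le> a" "0 \<le> l"
  shows "fusion_mult k (a, b) (b, a) (p - 2*l, p + l) = of_int (max 0 (Mfun k a b p l))"
  unfolding fusion_mult_def Let_def k0max_def calA_param calB_param
    k0min_param[OF assms(2,3)] Mfun_eq[OF assms(2)]
  using assms by (auto simp flip: of_int_min simp: max_def min_def)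

lemma mem_fusion_range_param_iff:
  assumes "0 \<le> b" "b \<le> a" "0 \<le> l"
  shows "(p - 2*l, p + l) \<in> fusion_range k (a, b) (b, a) \<longleftrightarrow> 0 < Mfun k a b p l"
proof -
  have "(p - 2*l, p + l) \<in> fusion_range k (a, b) (b, a) \<longleftrightarrow>
      (p - 2*l, p + l) \<in> Pplus k \<and> 0 < Mfun k a b p l"
    by (auto simp: fusion_range_def fusion_mult_param[OF assms] max_def)
  moreover have "0 < Mfun k a b p l \<Longrightarrow> (p - 2*l, p + l) \<in> Pplus k"
    using assms by (simp add: Pplus_def Mfun_pos_iff[OF assms(2)])
  ultimately show ?thesis by blast
qed

lemma mem_Par1_iff: "(p, l) \<in> Par1 k a b \<longleftrightarrow> 2 \<le> b \<and> 2*a + 3 \<le> k \<and> a + 2 \<le> p \<and> p \<le> a + b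
    \<and> p \<le> k - a - 1 \<and> 3*p \<le> 2*k \<and> 2*p \<le> b + k \<and> 1 \<le> l \<and> 2*p - k \<le> l \<and> l \<le> p - a - 1
    \<and> 2*l \<le> p \<and> l \<le> b"
  unfolding Par1_def by (simp add: le_div_iff_mult_le) linarith

lemma mem_Par2_iff: "(p, l) \<in> Par2 k a b \<longleftrightarrow> 1 \<le> b \<and> a + b + 1 \<le> k \<and> b + 1 \<le> p \<and> p \<le> a + b
    \<and> p \<le> k - a \<and> 1 \<le> l \<and> p - a \<le> l \<and> l \<le> p - b \<and> 2*l \<le> p \<and> l \<le> b"
  unfolding Par2_def by (simp add: le_div_iff_mult_le) linarith

lemma mem_Par3_iff: "(p, l) \<in> Par3 k a b \<longleftrightarrow> 2 \<le> b \<and> a + b + 1 \<le> k \<and> 2 \<le> p \<and> p \<le> k - a - 1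
    \<and> p \<le> 2*b - 2 \<and> 1 \<le> l \<and> p - b + 1 \<le> l \<and> l \<le> k - a - b \<and> 2*l \<le> p \<and> l \<le> b"
  unfolding Par3_def by (simp add: le_div_iff_mult_le) linarith

lemma mem_Par4_iff: "p \<in> Par4 k a b \<longleftrightarrow> 0 \<le> p \<and> p \<le> a \<and> p \<le> k - a"
  by (auto simp: Par4_def)

lemma mem_Par5_iff: "p \<in> Par5 k a b \<longleftrightarrow> 2*a + 2 \<le> k \<and> a + 1 \<le> p \<and> p \<le> a + b \<and> 2*p \<le> k"
  by (simp add: Par5_def le_div_iff_mult_le)

lemma Par123_pos:
  "(p, l) \<in> Par1 k a b \<Longrightarrow> 0 < l" "(p, l) \<in> Par2 k a b \<Longrightarrow> 0 < l"
  "(p, l) \<in> Par3 k a b \<Longrightarrow> 0 < l"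
  by (simp_all add: mem_Par1_iff mem_Par2_iff mem_Par3_iff)

lemma mem_Par123_iff:
  assumes "0 \<le> b" "b \<le> a" "a + b \<le> k" "0 < l"
  shows "(p, l) \<in> Par1 k a b \<union> Par2 k a b \<union> Par3 k a b \<longleftrightarrow> 0 < Mfun k a b p l"
proof
  assume "(p, l) \<in> Par1 k a b \<union> Par2 k a b \<union> Par3 k a b"
  then show "0 < Mfun k a b p l"
    using assms by (auto simp: Mfun_pos_iff mem_Par1_iff mem_Par2_iff mem_Par3_iff)
next
  assume "0 < Mfun k a b p l"
  then have adm: "2*l \<le> p" "p \<le> a + b" "l \<le> b" "a + b + l \<le> k" "2*p - l \<le> k" "a + p \<le> k"
    by (simp_all add: Mfun_pos_iff[OF assms(2)])
  consider "l < p - a" | "p - a \<le> l" "l \<le> p - b" | "p - b < l" by linarith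
  then show "(p, l) \<in> Par1 k a b \<union> Par2 k a b \<union> Par3 k a b"
  proof cases
    case 1
    then have "(p, l) \<in> Par1 k a b" unfolding mem_Par1_iff using adm assms by linarith
    then show ?thesis by simp
  next
    case 2
    then have "(p, l) \<in> Par2 k a b" unfolding mem_Par2_iff using adm assms by linarith
    then show ?thesis by simp
  next
    case 3
    then have "(p, l) \<in> Par3 k a b" unfolding mem_Par3_iff using adm assms by linarith
    then show ?thesis by simp
  qed
qed

lemma mem_Par45_iff:
  assumes "0 \<le> b" "b \<le> a" "a + b \<le> k"
  shows "p \<in> Par4 k a b \<union> Par5 k a b \<longleftrightarrow> 0 < Mfun k a b p 0"
  unfolding Mfun_pos_iff[OF assms(2)] Un_iff mem_Par4_iff mem_Par5_iff
  using assms by linarith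

lemma Par_disjoint:
  assumes "b \<le> a"
  shows "Par1 k a b \<inter> Par2 k a b = {}" "Par1 k a b \<inter> Par3 k a b = {}"
    "Par2 k a b \<inter> Par3 k a b = {}" "Par4 k a b \<inter> Par5 k a b = {}"
  using assms by (auto simp: mem_Par1_iff mem_Par2_iff mem_Par3_iff mem_Par4_iff mem_Par5_iff)

lemma mem_Tpair_iff: "(p - 2*l, p + l) \<in> Tpair P \<longleftrightarrow> (p, l) \<in> P \<or> (p - l, -l) \<in> P"
proof
  assume "(p - 2*l, p + l) \<in> Tpair P"
  then consider p' l' where "(p', l') \<in> P" "(p - 2*l, p + l) = (p' - 2*l', p' + l')"
    | p' l' where "(p', l') \<in> P" "(p - 2*l, p + l) = (p' + l', p' - 2*l')"
    unfolding Tpair_def by blast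
  then show "(p, l) \<in> P \<or> (p - l, -l) \<in> P"
  proof cases
    case 1
    then have "p' = p" "l' = l" by auto
    with 1 show ?thesis by simp
  next
    case 2
    then have "p' = p - l" "l' = -l" by auto
    with 2 show ?thesis by simp
  qed
next
  have "(p - 2*l, p + l) = ((p - l) + (-l), (p - l) - 2*(-l))" by simp
  then show "(p, l) \<in> P \<or> (p - l, -l) \<in> P \<Longrightarrow> (p - 2*l, p + l) \<in> Tpair P"
    unfolding Tpair_def by blast
qed

lemma mem_Tdiag_iff: "(p - 2*l, p + l) \<in> Tdiag P \<longleftrightarrow> l = 0 \<and> p \<in> P"
  unfolding Tdiag_def by auto

lemma Tpair_dvd: "nu \<in> Tpair P \<Longrightarrow> (3::int) dvd (snd nu - fst nu)"
  unfolding Tpair_def by auto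

lemma Tdiag_dvd: "nu \<in> Tdiag P \<Longrightarrow> (3::int) dvd (snd nu - fst nu)"
  unfolding Tdiag_def by auto

lemma swap_mem_Tpair: "prod.swap nu \<in> Tpair P \<longleftrightarrow> nu \<in> Tpair P"
  unfolding Tpair_def by (cases nu) auto

lemma swap_mem_Tdiag: "prod.swap nu \<in> Tdiag P \<longleftrightarrow> nu \<in> Tdiag P"
  unfolding Tdiag_def by (cases nu) auto

lemma Tpair_disjoint:
  assumes "P \<inter> Q = {}" "\<And>p l. (p, l) \<in> P \<union> Q \<Longrightarrow> 0 < l"
  shows "Tpair P \<inter> Tpair Q = {}"
  using assms unfolding Tpair_def disjoint_iff by auto (smt (verit, best))+

lemma Tpair_Tdiag_disjoint:
  assumes "\<And>p l. (p, l) \<in> P \<Longrightarrow> 0 < l"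
  shows "Tpair P \<inter> Tdiag R = {}"
  using assms unfolding Tpair_def Tdiag_def by fastforce

lemma Tdiag_disjoint: "R \<inter> S = {} \<Longrightarrow> Tdiag R \<inter> Tdiag S = {}"
  unfolding Tdiag_def by auto

lemma mem_T_union_param_iff:
  assumes "0 \<le> b" "b \<le> a" "a + b \<le> k" "0 \<le> l"
  shows "(p - 2*l, p + l) \<in> T1 k a b \<union> T2 k a b \<union> T3 k a b \<union> T4 k a b \<union> T5 k a b
    \<longleftrightarrow> 0 < Mfun k a b p l"
proof -
  have "(p - l, -l) \<notin> Par1 k a b \<union> Par2 k a b \<union> Par3 k a b"
    using assms(4) by (auto dest: Par123_pos)
  then have T_iff: "(p - 2*l, p + l) \<in> T1 k a b \<union> T2 k a b \<union> T3 k a b \<union> T4 k a b \<union> T5 k a b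
      \<longleftrightarrow> (p, l) \<in> Par1 k a b \<union> Par2 k a b \<union> Par3 k a b \<or> (l = 0 \<and> p \<in> Par4 k a b \<union> Par5 k a b)"
    unfolding T1_def T2_def T3_def T4_def T5_def Un_iff mem_Tpair_iff mem_Tdiag_iff by blast
  show ?thesis
  proof (cases "l = 0")
    case True
    then have "(p, l) \<notin> Par1 k a b \<union> Par2 k a b \<union> Par3 k a b" by (auto dest: Par123_pos)
    then show ?thesis using T_iff mem_Par45_iff[OF assms(1-3)] True by simp
  next
    case False
    then show ?thesis using T_iff mem_Par123_iff[OF assms(1-3)] assms(4) by simp
  qed
qed

lemma fusion_range_eq_T_union:
  assumes "0 \<le> b" "b \<le> a" "a + b \<le> k"
  shows "fusion_range k (a, b) (b, a) = T1 k a b \<union> T2 k a b \<union> T3 k a b \<union> T4 k a b \<union> T5 k a b"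
    (is "?R = ?T")
proof -
  have swap_T: "prod.swap nu \<in> ?T \<longleftrightarrow> nu \<in> ?T" for nu
    unfolding T1_def T2_def T3_def T4_def T5_def Un_iff swap_mem_Tpair swap_mem_Tdiag ..
  have ordered: "(x, y) \<in> ?R \<longleftrightarrow> (x, y) \<in> ?T" if "x \<le> y" for x y
  proof (cases "(3::int) dvd (y - x)")
    case True
    then obtain l where l: "y - x = 3*l" by blast
    define p where "p = y - l"
    have "0 \<le> l" using l that by simp
    have "(x, y) = (p - 2*l, p + l)" using l by (simp add: p_def)
    then show ?thesis
      using mem_fusion_range_param_iff[OF assms(1,2) \<open>0 \<le> l\<close>]
        mem_T_union_param_iff[OF assms \<open>0 \<le> l\<close>] by simp
  next
    case False
    then have "(x, y) \<notin> ?R" by (simp add: fusion_range_def fusion_mult_eq_0_if_not_dvd)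
    moreover have "(x, y) \<notin> ?T"
      using False Tpair_dvd Tdiag_dvd unfolding T1_def T2_def T3_def T4_def T5_def by fastforce
    ultimately show ?thesis by blast
  qed
  show ?thesis
  proof (rule set_eqI)
    fix nu :: weight
    obtain x y where nu: "nu = (x, y)" by fastforce
    show "nu \<in> ?R \<longleftrightarrow> nu \<in> ?T"
    proof (cases "x \<le> y")
      case True
      then show ?thesis using ordered nu by blast
    next
      case False
      then show ?thesis
        using ordered[of y x] swap_mem_fusion_range[of nu] swap_T[of nu] nu by simp
    qed
  qed
qed

lemma disjoint_family_Tfam:
  assumes "b \<le> a"
  shows "disjoint_family_on (Tfam k a b) {1..5}"
proof -
  have "T1 k a b \<inter> T2 k a b = {}"
    unfolding T1_def T2_def using Par_disjoint(1)[OF assms]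
    by (rule Tpair_disjoint) (auto intro: Par123_pos)
  moreover have "T1 k a b \<inter> T3 k a b = {}"
    unfolding T1_def T3_def using Par_disjoint(2)[OF assms]
    by (rule Tpair_disjoint) (auto intro: Par123_pos)
  moreover have "T2 k a b \<inter> T3 k a b = {}"
    unfolding T2_def T3_def using Par_disjoint(3)[OF assms]
    by (rule Tpair_disjoint) (auto intro: Par123_pos)
  moreover have "T4 k a b \<inter> T5 k a b = {}"
    unfolding T4_def T5_def using Par_disjoint(4)[OF assms] by (rule Tdiag_disjoint)
  moreover have "Tpair P \<inter> Tdiag R = {}" if "P \<in> {Par1 k a b, Par2 k a b, Par3 k a b}" for P R
    using that by (auto intro!: Tpair_Tdiag_disjoint intro: Par123_pos)
  ultimately show ?thesis
    unfolding disjoint_family_on_def atLeastAtMost_iff Tfam_def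
    unfolding T1_def T2_def T3_def T4_def T5_def
    by (auto simp: Int_commute)
qed

lemma fusion_mult_Par123:
  assumes "0 \<le> b" "b \<le> a" "a + b \<le> k" "(p, l) \<in> Par1 k a b \<union> Par2 k a b \<union> Par3 k a b"
  shows "fusion_mult k (a, b) (b, a) (p - 2*l, p + l) = of_int (Mfun k a b p l)"
    and "fusion_mult k (a, b) (b, a) (p + l, p - 2*l) = of_int (Mfun k a b p l)"
proof -
  have "0 < l" using assms(4) by (auto dest: Par123_pos)
  then have "0 < Mfun k a b p l" using mem_Par123_iff assms by blast
  with \<open>0 < l\<close> show *: "fusion_mult k (a, b) (b, a) (p - 2*l, p + l) = of_int (Mfun k a b p l)"
    using fusion_mult_param assms by simp
  show "fusion_mult k (a, b) (b, a) (p + l, p - 2*l) = of_int (Mfun k a b p l)"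
    using fusion_mult_conjugate_pair_swap[of k a b "(p - 2*l, p + l)"] * by simp
qed

lemma fusion_mult_Par45:
  assumes "0 \<le> b" "b \<le> a" "a + b \<le> k" "p \<in> Par4 k a b \<union> Par5 k a b"
  shows "fusion_mult k (a, b) (b, a) (p, p) = of_int (Mfun k a b p 0)"
proof -
  have "0 < Mfun k a b p 0" using mem_Par45_iff assms by blast
  then show ?thesis using fusion_mult_param[of b a 0 k p] assms by simp
qed

theorem mainTheorem4:
  fixes k a b :: int
  assumes "k \<ge> 1" and "a \<ge> b" and "b \<ge> 0" and "a + b \<le> k"
  shows "fusion_range k (a, b) (b, a) = T1 k a b \<union> T2 k a b \<union> T3 k a b \<union> T4 k a b \<union> T5 k a b
    \<and> disjoint_family_on (Tfam k a b) {1..5}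
    \<and> (\<forall>(p, l) \<in> Par1 k a b \<union> Par2 k a b \<union> Par3 k a b.
          fusion_mult k (a, b) (b, a) (p - 2*l, p + l) = of_int (Mfun k a b p l)
        \<and> fusion_mult k (a, b) (b, a) (p + l, p - 2*l) = of_int (Mfun k a b p l))
    \<and> (\<forall>p \<in> Par4 k a b \<union> Par5 k a b.
          fusion_mult k (a, b) (b, a) (p, p) = of_int (Mfun k a b p 0))"
proof (intro conjI)
  show "fusion_range k (a, b) (b, a) = T1 k a b \<union> T2 k a b \<union> T3 k a b \<union> T4 k a b \<union> T5 k a b"
    using fusion_range_eq_T_union assms by blast
  show "disjoint_family_on (Tfam k a b) {1..5}"
    using disjoint_family_Tfam assms by blast
  show "\<forall>(p, l) \<in> Par1 k a b \<union> Par2 k a b \<union> Par3 k a b.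
          fusion_mult k (a, b) (b, a) (p - 2*l, p + l) = of_int (Mfun k a b p l)
        \<and> fusion_mult k (a, b) (b, a) (p + l, p - 2*l) = of_int (Mfun k a b p l)"
    using fusion_mult_Par123 assms by blast
  show "\<forall>p \<in> Par4 k a b \<union> Par5 k a b.
          fusion_mult k (a, b) (b, a) (p, p) = of_int (Mfun k a b p 0)"
    using fusion_mult_Par45 assms by blast
qed

end
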